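(* Let $H:\mathbb{R}/\mathbb{Z}\times\mathbb{D}\to\mathbb{R}$ be smooth, vanishing on $\mathbb{R}/\mathbb{Z}\times\partial\mathbb{D}$, generating the symplectic isotopy $\tilde\varphi$, and suppose that the Hamiltonian vector field $X_{H^t}$ restricted to $\partial\mathbb{D}$ is independent of $t$ and that the rotation number on the boundary satisfies $|\rho(\tilde\varphi|_{\partial\mathbb{D}})|<1$. Let $H_n$ be defined, in polar coordinates $(r,\theta)$, by $H_n(t,1+r,\theta)=H(t,1+\rho_n(r),\theta)$ (with $H_n=H$ on $\mathbb{D}$), where $H$ also denotes a fixed smooth extension of $H$ to $\mathbb{R}/\mathbb{Z}\times\mathbb{R}^2$ and $\rho_n:\mathbb{R}\to\mathbb{R}$ are smooth functions with $\rho_n(r)=r$ for $r\le0$, $\rho_n(r)=0$ for $r\ge1/n$, and on $r\ge0$: $\rho_n\ge0$, $|\rho_n'|\le1$, $|\rho_n|\le1/n$, together with $\rho_n'(r)\ge-1/n$ for all $r$. Then for all sufficiently large $n$, every trajectory $x_n:[0,1]\to\mathbb{R}^2$ of $X_{H_n}$ whose image lies in $\mathbb{R}^2\setminus\dot{\mathbb{D}}$ satisfies $|\mathrm{wind}(x_n)|<1$.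
   Context: $\mathbb{D}\subset\mathbb{R}^2$ is the closed unit disc, $\dot{\mathbb{D}}$ its interior, $\omega=dx\wedge dy$. Hamiltonian vector fields are defined by $\iota_{X_{H^t}}\omega=dH^t$, and $\tilde\varphi=\{\varphi_t\}$ is the flow $\frac{d}{dt}\varphi_t=X_{H^t}\circ\varphi_t$, $\varphi_0=\mathrm{id}$, which preserves $\mathbb{D}$. The rotation number $\rho(\tilde\varphi|_{\partial\mathbb{D}})$ is the rotation number (in full turns) of the lift of $\varphi_1|_{\partial\mathbb{D}}$ determined by the isotopy. If $x(t)=r(t)e^{i\theta(t)}$ with $\theta$ continuous, then $\mathrm{wind}(x)=(\theta(1)-\theta(0))/2\pi$. *)

theory Defs
  imports "HOL-Analysis.Analysis"
begin

text \<open>The plane R^2 is identified with the complex numbers; the closed unit disc is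
  the set of z with norm z \<le> 1.\<close>

coinductive smooth :: "('a::real_normed_vector \<Rightarrow> 'b::real_normed_vector) \<Rightarrow> bool" where
  smoothI: "(\<And>x. (f has_derivative f' x) (at x)) \<Longrightarrow> (\<And>v. smooth (\<lambda>x. f' x v)) \<Longrightarrow> smooth f"

text \<open>Symplectic form omega = dx wedge dy, so omega(v,w) = Im (cnj v * w).
  The Hamiltonian vector field X with iota_X omega = dH^t.\<close>
definition omega :: "complex \<Rightarrow> complex \<Rightarrow> real" where
  "omega v w = Im (cnj v * w)"

definition hamvf :: "(real \<Rightarrow> complex \<Rightarrow> real) \<Rightarrow> real \<Rightarrow> complex \<Rightarrow> complex" where
  "hamvf H t z = (THE v. \<forall>w. frechet_derivative (H t) (at z) w = omega v w)"

text \<open>The flow phi_t of X_{H^t} (for initial points in the disc, where it exists for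
  all times).\<close>
definition flow :: "(real \<Rightarrow> complex \<Rightarrow> real) \<Rightarrow> real \<Rightarrow> complex \<Rightarrow> complex" where
  "flow H t z = (THE x. x 0 = z \<and> (\<forall>s. (x has_vector_derivative hamvf H s (x s)) (at s))) t"

definition boundary_lift :: "(real \<Rightarrow> complex \<Rightarrow> real) \<Rightarrow> real \<Rightarrow> real" where
  "boundary_lift H s = (THE y. \<exists>\<theta>. continuous_on {0..1} \<theta> \<and> \<theta> 0 = s \<and>
      (\<forall>t\<in>{0..1}. flow H t (cis (2 * pi * s)) = cis (2 * pi * \<theta> t)) \<and> y = \<theta> 1)"

definition rotation_number :: "(real \<Rightarrow> complex \<Rightarrow> real) \<Rightarrow> real" where
  "rotation_number H = lim (\<lambda>k. ((boundary_lift H ^^ k) 0 - 0) / real k)"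

definition wind :: "(real \<Rightarrow> complex) \<Rightarrow> real" where
  "wind x = (THE w. \<exists>\<theta>. continuous_on {0..1} \<theta> \<and>
      (\<forall>t\<in>{0..1}. x t = of_real (norm (x t)) * cis (\<theta> t)) \<and> w = (\<theta> 1 - \<theta> 0) / (2 * pi))"

text \<open>H_n(t,1+r,theta) = H(t,1+rho(r),theta) outside the disc, H_n = H on the disc.\<close>
definition cutoff_ham :: "(real \<Rightarrow> complex \<Rightarrow> real) \<Rightarrow> (real \<Rightarrow> real) \<Rightarrow> real \<Rightarrow> complex \<Rightarrow> real" where
  "cutoff_ham H \<rho> t z = (if norm z \<le> 1 then H t z
      else H t (of_real ((1 + \<rho> (norm z - 1)) / norm z) * z))"

end

theory Submission
  imports Defs
begin

text \<open>On the boundary circle the Hamiltonian vector field is \<open>- \<i> b(\<theta>) e\<^sup>i\<^sup>\<theta>\<close>, where \<open>b\<close> is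
  the radial derivative of \<open>H\<close> there, so the boundary flow turns with angular velocity \<open>-b\<close>.
  Outside the disc \<open>H\<^sub>n = H \<circ> m\<^sub>n\<close> for a radial map \<open>m\<^sub>n\<close> that pushes the annulus of width
  \<open>1/n\<close> back to within \<open>1/n\<close> of the circle, and a trajectory at radius \<open>R\<close> has angular velocity
  \<open>- \<rho>\<^sub>n'(R - 1) \<partial>\<^sub>rH(m\<^sub>n x) / R\<close>. For large \<open>n\<close> this is at most \<open>|b(\<theta>)| + \<delta>\<close> in absolute
  value, so for an antiderivative \<open>\<Theta>\<close> of \<open>1 / (|b| + \<delta>)\<close> the function \<open>\<Theta>(\<theta>(t))\<close> moves with speed
  at most 1. It therefore suffices to find \<open>\<delta> > 0\<close> for which \<open>\<Theta>\<close> grows by more than 1 over every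
  period \<open>2\<pi>\<close>. If \<open>b\<close> vanishes somewhere, any small \<open>\<delta>\<close> works, since near a zero \<open>1 / (|b| + \<delta>)\<close>
  dominates \<open>1 / (L |\<theta> - \<theta>\<^sub>0| + \<delta>)\<close>, whose integral is unbounded as \<open>\<delta> \<rightarrow> 0\<close>. Otherwise the
  boundary flow turns once in time \<open>T = |\<integral>\<^sub>0\<^sup>2\<^sup>\<pi> d\<theta> / b|\<close> and has rotation number \<open>\<plusminus>1/T\<close>,
  so \<open>|\<rho>| < 1\<close> means \<open>\<integral>\<^sub>0\<^sup>2\<^sup>\<pi> d\<theta> / |b| > 1\<close>, an inequality that survives a small \<open>\<delta>\<close>.\<close>

section \<open>Smooth functions\<close>

lemma smoothE:
  assumes "smooth f"
  obtains f' where "\<And>x. (f has_derivative f' x) (at x)" "\<And>v. smooth (\<lambda>x. f' x v)"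
  using assms by (cases rule: smooth.cases) auto

lemma smooth_has_derivative:
  "smooth f \<Longrightarrow> (f has_derivative frechet_derivative f (at x)) (at x)"
  by (metis smoothE frechet_derivative_at)

lemma smooth_frechet_derivative:
  assumes "smooth f"
  shows "smooth (\<lambda>x. frechet_derivative f (at x) v)"
proof -
  obtain f' where f': "\<And>x. (f has_derivative f' x) (at x)" and "\<And>v. smooth (\<lambda>x. f' x v)"
    using smoothE[OF assms] by blast
  moreover have "frechet_derivative f (at x) = f' x" for x
    using frechet_derivative_at[OF f'] by simp
  ultimately show ?thesis by simp
qed

lemma smooth_isCont: "smooth f \<Longrightarrow> isCont f x"
  by (metis smoothE has_derivative_continuous)

lemma smooth_continuous_on: "smooth f \<Longrightarrow> continuous_on S f"
  by (simp add: continuous_at_imp_continuous_on smooth_isCont)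

lemma smooth_has_real_derivative:
  fixes f :: "real \<Rightarrow> real"
  shows "smooth f \<Longrightarrow> (f has_real_derivative deriv f x) (at x)"
  by (metis smoothE differentiableI DERIV_deriv_iff_real_differentiable)

lemma linear_complex_to_real_eq:
  fixes D :: "complex \<Rightarrow> real"
  assumes "linear D"
  shows "D w = Re w * D 1 + Im w * D \<i>"
proof -
  have "w = Re w *\<^sub>R 1 + Im w *\<^sub>R \<i>" by (simp add: complex_eq_iff)
  then have "D w = D (Re w *\<^sub>R 1 + Im w *\<^sub>R \<i>)" by simp
  also have "\<dots> = Re w * D 1 + Im w * D \<i>"
    using assms by (simp add: linear_add linear_scale)
  finally show ?thesis .
qed

lemma onorm_complex_to_real_le:
  fixes D :: "complex \<Rightarrow> real"
  assumes "linear D"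
  shows "onorm D \<le> \<bar>D 1\<bar> + \<bar>D \<i>\<bar>"
proof (rule onorm_le)
  fix h :: complex
  have "norm (D h) = \<bar>Re h * D 1 + Im h * D \<i>\<bar>"
    using linear_complex_to_real_eq[OF assms, of h] by simp
  also have "\<dots> \<le> \<bar>Re h\<bar> * \<bar>D 1\<bar> + \<bar>Im h\<bar> * \<bar>D \<i>\<bar>"
    by (rule order_trans[OF abs_triangle_ineq]) (simp add: abs_mult)
  also have "\<dots> \<le> norm h * \<bar>D 1\<bar> + norm h * \<bar>D \<i>\<bar>"
    by (intro add_mono mult_right_mono abs_Re_le_cmod abs_Im_le_cmod) simp_all
  finally show "norm (D h) \<le> (\<bar>D 1\<bar> + \<bar>D \<i>\<bar>) * norm h" by (simp add: algebra_simps)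
qed

lemma smooth_lipschitz_on_snd:
  fixes f :: "real \<times> complex \<Rightarrow> real"
  assumes "smooth f"
  shows "\<exists>L. \<forall>s\<in>{-T..T}. L-lipschitz_on (cball 0 R) (\<lambda>z. f (s, z))"
proof -
  define D where "D p h = frechet_derivative f (at p) (0, h)" for p h
  have D: "((\<lambda>z. f (s, z)) has_derivative D (s, z)) (at z)" for s z
  proof -
    have "((\<lambda>z. (s, z)) has_derivative (\<lambda>h. (0, h))) (at z)" by (auto intro!: derivative_eq_intros)
    from diff_chain_at[OF this smooth_has_derivative[OF assms]] show ?thesis by (simp add: o_def D_def[abs_def])
  qed
  define K where "K = {-T..T} \<times> cball (0::complex) R"
  have "continuous_on K (\<lambda>p. frechet_derivative f (at p) v)" for v
    using assms by (intro smooth_continuous_on smooth_frechet_derivative)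
  then have "continuous_on K (\<lambda>p. \<bar>D p 1\<bar> + \<bar>D p \<i>\<bar>)" unfolding D_def by (intro continuous_intros)
  moreover have "compact K" unfolding K_def by (intro compact_Times compact_Icc compact_cball)
  ultimately have "bounded ((\<lambda>p. \<bar>D p 1\<bar> + \<bar>D p \<i>\<bar>) ` K)" by (intro compact_imp_bounded compact_continuous_image)
  then obtain M where "M > 0" and M: "\<And>p. p \<in> K \<Longrightarrow> \<bar>D p 1\<bar> + \<bar>D p \<i>\<bar> \<le> M"
    unfolding bounded_pos by fastforce
  have "M-lipschitz_on (cball 0 R) (\<lambda>z. f (s, z))" if "s \<in> {-T..T}" for s
  proof (rule lipschitz_onI)
    have bound: "onorm (D (s, z)) \<le> M" if "z \<in> cball 0 R" for z
    proof -
      have "(s, z) \<in> K" using \<open>s \<in> {-T..T}\<close> that by (simp add: K_def)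
      from order_trans[OF onorm_complex_to_real_le[OF has_derivative_linear[OF D]] M[OF this]]
      show ?thesis .
    qed
    fix z w :: complex assume "z \<in> cball 0 R" "w \<in> cball 0 R"
    from differentiable_bound[OF convex_cball has_derivative_at_withinI[OF D[of s]] bound this]
    show "dist (f (s, z)) (f (s, w)) \<le> M * dist z w" by (simp add: dist_norm)
  qed (use \<open>M > 0\<close> in simp)
  then show ?thesis by blast
qed

section \<open>Angle functions and winding\<close>

lemma cis_eq_imp_diff_Ints:
  assumes "cis a = cis b"
  shows "(a - b) / (2 * pi) \<in> \<int>"
proof -
  have "cos (a - b) = 1"
    using assms by (metis cis.sel(1) cis_divide one_complex.sel(1) divide_self cis_neq_zero)
  then obtain n :: int where "a - b = of_int n * 2 * pi" using cos_one_2pi_int by blast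
  then show ?thesis by simp
qed

lemma angle_lift_unique:
  fixes \<phi> \<theta> :: "real \<Rightarrow> real"
  assumes "connected S" "continuous_on S \<phi>" "continuous_on S \<theta>"
    and eq: "\<And>t. t \<in> S \<Longrightarrow> cis (\<phi> t) = cis (\<theta> t)"
    and "s \<in> S" "t \<in> S"
  shows "\<phi> t - \<phi> s = \<theta> t - \<theta> s"
proof -
  define f where "f t = (\<phi> t - \<theta> t) / (2 * pi)" for t
  have Ints: "f t \<in> \<int>" if "t \<in> S" for t
    unfolding f_def using eq[OF that] by (rule cis_eq_imp_diff_Ints)
  have "f constant_on S"
  proof (rule continuous_discrete_range_constant[OF \<open>connected S\<close>])
    show "continuous_on S f"
      unfolding f_def by (intro continuous_intros assms) auto
    show "\<exists>e>0. \<forall>y. y \<in> S \<and> f y \<noteq> f x \<longrightarrow> e \<le> norm (f y - f x)" if "x \<in> S" for x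
    proof (intro exI[of _ 1] conjI allI impI)
      fix y assume y: "y \<in> S \<and> f y \<noteq> f x"
      obtain k l :: int where k: "f x = of_int k" and l: "f y = of_int l"
        using Ints[OF \<open>x \<in> S\<close>] Ints[of y] y by (auto elim!: Ints_cases)
      then have "1 \<le> \<bar>l - k\<bar>" using y by auto
      then show "1 \<le> norm (f y - f x)" unfolding k l by (simp flip: of_int_diff of_int_abs)
    qed simp
  qed
  then obtain c where "\<And>t. t \<in> S \<Longrightarrow> f t = c" unfolding constant_on_def by blast
  then have "f t = f s" using assms(5,6) by simp
  then show ?thesis unfolding f_def by (simp add: field_simps)
qed

lemma wind_eq_angle_increment:
  fixes \<phi> :: "real \<Rightarrow> real" and x :: "real \<Rightarrow> complex"
  assumes c\<phi>: "continuous_on {0..1} \<phi>"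
    and polar: "\<And>t. t \<in> {0..1} \<Longrightarrow> x t = of_real (norm (x t)) * cis (\<phi> t)"
    and nz: "\<And>t. t \<in> {0..1} \<Longrightarrow> x t \<noteq> 0"
  shows "wind x = (\<phi> 1 - \<phi> 0) / (2 * pi)"
  unfolding wind_def
proof (rule the_equality)
  fix w assume "\<exists>\<theta>. continuous_on {0..1} \<theta> \<and> (\<forall>t\<in>{0..1}. x t = of_real (norm (x t)) * cis (\<theta> t))
          \<and> w = (\<theta> 1 - \<theta> 0) / (2 * pi)"
  then obtain \<theta> where c\<theta>: "continuous_on {0..1} \<theta>"
    and polar': "\<forall>t\<in>{0..1}. x t = of_real (norm (x t)) * cis (\<theta> t)" and w: "w = (\<theta> 1 - \<theta> 0) / (2 * pi)"
    by blast
  have "cis (\<phi> t) = cis (\<theta> t)" if "t \<in> {0..1}" for t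
  proof -
    have "of_real (norm (x t)) * cis (\<phi> t) = of_real (norm (x t)) * cis (\<theta> t)"
      using polar[OF that] polar' that by metis
    then show ?thesis using nz[OF that] by simp
  qed
  with c\<phi> c\<theta> have "\<phi> 1 - \<phi> 0 = \<theta> 1 - \<theta> 0" by (intro angle_lift_unique[of "{0..1}"]) auto
  then show "w = (\<phi> 1 - \<phi> 0) / (2 * pi)" using w by simp
qed (use c\<phi> polar in blast)

lemma continuous_logarithm_has_vector_derivative:
  fixes g x :: "real \<Rightarrow> complex"
  assumes cg: "continuous_on S g" and xg: "\<And>t. t \<in> S \<Longrightarrow> x t = exp (g t)"
    and der: "(x has_vector_derivative x') (at t0 within S)" and t0: "t0 \<in> S"
  shows "(g has_vector_derivative x' / x t0) (at t0 within S)"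
proof -
  obtain d where d: "d > 0" and dd: "\<And>s. s \<in> S \<Longrightarrow> dist s t0 < d \<Longrightarrow> dist (g s) (g t0) < pi"
    using cg t0 unfolding continuous_on_iff by (metis pi_gt_zero)
  \<comment> \<open>Near \<open>t0\<close>, \<open>g\<close> agrees with a branch of \<open>Ln\<close> of \<open>x / x t0\<close>, which can be differentiated.\<close>
  define h where "h s = g t0 + Ln (x s / x t0)" for s
  have gh: "g s = h s" if "s \<in> S" "dist s t0 < d" for s
  proof -
    have "x s / x t0 = exp (g s - g t0)"
      using xg[OF that(1)] xg[OF t0] by (simp add: exp_diff)
    moreover have "\<bar>Im (g s - g t0)\<bar> < pi"
      using dd[OF that] abs_Im_le_cmod[of "g s - g t0"] by (simp add: dist_norm)
    ultimately show ?thesis by (simp add: h_def)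
  qed
  have "x t0 \<noteq> 0" using xg[OF t0] by simp
  have quotient: "((\<lambda>s. x s / x t0) has_vector_derivative x' / x t0) (at t0 within S)"
    by (intro derivative_intros der)
  have "(Ln has_field_derivative inverse 1) (at 1)"
    by (rule has_field_derivative_Ln) simp
  then have Ln: "(Ln has_field_derivative 1) (at ((\<lambda>s. x s / x t0) t0) within (\<lambda>s. x s / x t0) ` S)"
    using \<open>x t0 \<noteq> 0\<close> by (simp add: has_field_derivative_at_within)
  from field_vector_diff_chain_within[OF quotient Ln]
  have "((\<lambda>s. Ln (x s / x t0)) has_vector_derivative x' / x t0) (at t0 within S)"
    by (simp add: o_def)
  then have "(h has_vector_derivative x' / x t0) (at t0 within S)"
    unfolding h_def by (rule has_vector_derivative_eq_rhs[OF has_vector_derivative_add[OF has_vector_derivative_const]]) simp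
  then show ?thesis
    by (rule has_vector_derivative_transform_within[OF _ d t0]) (simp add: gh)
qed

lemma angle_lift_exists:
  fixes x x' :: "real \<Rightarrow> complex"
  assumes der: "\<And>t. t \<in> {0..1} \<Longrightarrow> (x has_vector_derivative x' t) (at t within {0..1})"
    and nz: "\<And>t. t \<in> {0..1} \<Longrightarrow> x t \<noteq> 0"
  obtains \<phi> where "continuous_on {0..1} \<phi>"
    "\<And>t. t \<in> {0..1} \<Longrightarrow> x t = of_real (norm (x t)) * cis (\<phi> t)"
    "\<And>t. t \<in> {0..1} \<Longrightarrow> (\<phi> has_real_derivative Im (x' t / x t)) (at t within {0..1})"
proof -
  have "continuous_on {0..1} x" using der by (rule continuous_on_vector_derivative)
  from continuous_logarithm_on_contractible[OF this convex_imp_contractible[OF convex_real_interval(5)] nz]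
  obtain g where cg: "continuous_on {0..1} g" and xg: "\<And>t. t \<in> {0..1} \<Longrightarrow> x t = exp (g t)"
    by blast
  define \<phi> where "\<phi> t = Im (g t)" for t
  have "x t = of_real (norm (x t)) * cis (\<phi> t)" if "t \<in> {0..1}" for t
  proof -
    have "norm (x t) = exp (Re (g t))" using xg[OF that] by simp
    then show ?thesis unfolding \<phi>_def using xg[OF that] by (simp add: exp_eq_polar[of "g t"])
  qed
  moreover have "continuous_on {0..1} \<phi>" unfolding \<phi>_def by (intro continuous_intros cg)
  moreover have "(\<phi> has_real_derivative Im (x' t / x t)) (at t within {0..1})" if "t \<in> {0..1}" for t
    unfolding \<phi>_def
    by (intro has_field_derivative_Im continuous_logarithm_has_vector_derivative[OF cg xg der] that)
  ultimately show ?thesis using that by blast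
qed

section \<open>Real analysis\<close>

lemma continuous_has_real_antiderivative:
  fixes f :: "real \<Rightarrow> real"
  assumes "\<And>x. isCont f x"
  obtains F where "\<And>x. (F has_real_derivative f x) (at x)"
proof -
  have "\<exists>F. \<forall>x :: real. -\<infinity> < ereal x \<longrightarrow> ereal x < \<infinity> \<longrightarrow> (F has_vector_derivative f x) (at x)"
    by (rule einterval_antiderivative) (use assms in auto)
  then show ?thesis using that by (auto simp: has_real_derivative_iff_has_vector_derivative)
qed

lemma antiderivative_periodic_increment:
  fixes f \<Theta> :: "real \<Rightarrow> real"
  assumes \<Theta>: "\<And>y. (\<Theta> has_real_derivative f y) (at y)" and periodic: "\<And>y. f (y + p) = f y"
  shows "\<Theta> (y + p) - \<Theta> y = \<Theta> (z + p) - \<Theta> z"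
proof -
  have "((\<lambda>y. \<Theta> (y + p) - \<Theta> y) has_real_derivative 0) (at y)" for y
  proof -
    have "((\<lambda>y. y + p) has_real_derivative 1) (at y)" by (auto intro!: derivative_eq_intros)
    from DERIV_chain'[OF this \<Theta>]
    have "((\<lambda>y. \<Theta> (y + p)) has_real_derivative f (y + p)) (at y)" by simp
    from DERIV_diff[OF this \<Theta>[of y]] show ?thesis using periodic by simp
  qed
  then show ?thesis using DERIV_isconst_all[of "\<lambda>y. \<Theta> (y + p) - \<Theta> y"] by blast
qed

lemma periodic_continuous_bounded:
  fixes g :: "real \<Rightarrow> 'a::real_normed_vector"
  assumes cont: "continuous_on UNIV g" and periodic: "\<And>z. g (z + T) = g z" and "T \<noteq> 0"
  shows "bounded (range g)"
proof -
  have shift: "g (z + of_int k * T) = g z" for z k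
  proof (induction k rule: int_induct[where k = 0])
    case (step1 i)
    then show ?case using periodic[of "z + of_int i * T"] by (simp add: algebra_simps)
  next
    case (step2 i)
    then show ?case using periodic[of "z + of_int (i - 1) * T"] by (simp add: algebra_simps)
  qed simp
  have "range g \<subseteq> g ` closed_segment 0 T"
  proof clarify
    fix z
    define u where "u = frac (z / T)"
    have "u *\<^sub>R T \<in> closed_segment 0 T"
      unfolding in_segment u_def using frac_lt_1[of "z / T"]
      by (intro exI[of _ "frac (z / T)"]) (simp add: less_imp_le)
    moreover have "u *\<^sub>R T + of_int \<lfloor>z / T\<rfloor> * T = z"
      using \<open>T \<noteq> 0\<close> by (simp add: u_def frac_def algebra_simps)
    ultimately show "g z \<in> g ` closed_segment 0 T"
      using shift[of "u *\<^sub>R T" "\<lfloor>z / T\<rfloor>"] by force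
  qed
  moreover have "compact (g ` closed_segment 0 T)"
    by (intro compact_continuous_image continuous_on_subset[OF cont] compact_segment) auto
  ultimately show ?thesis by (meson bounded_subset compact_imp_bounded)
qed

lemma gronwall_vanishing:
  fixes w w' :: "real \<Rightarrow> real"
  assumes w': "\<And>s. (w has_real_derivative w' s) (at s)"
    and nonneg: "\<And>s. w s \<ge> 0" and "w 0 = 0"
    and bound: "\<And>s. \<bar>s\<bar> \<le> \<bar>t\<bar> \<Longrightarrow> \<bar>w' s\<bar> \<le> K * w s"
  shows "w t = 0"
proof (cases "t \<ge> 0")
  case True
  have "exp (- K * t) * w t \<le> exp (- K * 0) * w 0"
  proof (rule DERIV_nonpos_imp_nonincreasing[where f = "\<lambda>s. exp (- K * s) * w s"])
    fix s assume s: "0 \<le> s" "s \<le> t"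
    have "((\<lambda>s. exp (- K * s) * w s) has_real_derivative exp (- K * s) * (w' s - K * w s)) (at s)"
      by (auto intro!: derivative_eq_intros w' simp: algebra_simps)
    moreover have "exp (- K * s) * (w' s - K * w s) \<le> 0"
      using bound[of s] s by (intro mult_nonneg_nonpos) auto
    ultimately show "\<exists>y. ((\<lambda>s. exp (- K * s) * w s) has_real_derivative y) (at s) \<and> y \<le> 0" by blast
  qed (use True in simp)
  then show ?thesis using nonneg[of t] \<open>w 0 = 0\<close> by (simp add: mult_le_0_iff)
next
  case False
  have "exp (K * t) * w t \<le> exp (K * 0) * w 0"
  proof (rule DERIV_nonneg_imp_nondecreasing[where f = "\<lambda>s. exp (K * s) * w s"])
    fix s assume s: "t \<le> s" "s \<le> 0"
    have "((\<lambda>s. exp (K * s) * w s) has_real_derivative exp (K * s) * (w' s + K * w s)) (at s)"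
      by (auto intro!: derivative_eq_intros w' simp: algebra_simps)
    moreover have "exp (K * s) * (w' s + K * w s) \<ge> 0"
      using bound[of s] s False by (intro mult_nonneg_nonneg) auto
    ultimately show "\<exists>y. ((\<lambda>s. exp (K * s) * w s) has_real_derivative y) (at s) \<and> y \<ge> 0" by blast
  qed (use False in simp)
  then show ?thesis using nonneg[of t] \<open>w 0 = 0\<close> by (simp add: mult_le_0_iff)
qed

lemma ode_solution_unique:
  fixes V :: "real \<Rightarrow> 'a::real_inner \<Rightarrow> 'a" and x y :: "real \<Rightarrow> 'a"
  assumes lip: "\<And>T R. \<exists>L. \<forall>s\<in>{-T..T}. L-lipschitz_on (cball 0 R) (V s)"
    and x: "\<And>s. (x has_vector_derivative V s (x s)) (at s)"
    and y: "\<And>s. (y has_vector_derivative V s (y s)) (at s)"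
    and "x 0 = y 0"
  shows "x = y"
proof
  fix t :: real
  define T where "T = \<bar>t\<bar>"
  have "continuous_on {-T..T} x" "continuous_on {-T..T} y"
    using x y by (auto intro!: continuous_at_imp_continuous_on has_vector_derivative_continuous)
  then have "bounded (x ` {-T..T} \<union> y ` {-T..T})"
    by (intro bounded_Un[THEN iffD2] conjI compact_imp_bounded compact_continuous_image) auto
  then obtain R where "\<forall>v \<in> x ` {-T..T} \<union> y ` {-T..T}. norm v \<le> R"
    unfolding bounded_iff by blast
  then have R: "x s \<in> cball 0 R \<and> y s \<in> cball 0 R" if "s \<in> {-T..T}" for s
    using that by auto
  obtain L where L: "\<And>s. s \<in> {-T..T} \<Longrightarrow> L-lipschitz_on (cball 0 R) (V s)" using lip by blast
  define d where "d s = x s - y s" for s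
  define e where "e s = V s (x s) - V s (y s)" for s
  have "d t \<bullet> d t = 0"
  proof (rule gronwall_vanishing[where w = "\<lambda>s. d s \<bullet> d s" and w' = "\<lambda>s. 2 * (d s \<bullet> e s)" and K = "2 * L"])
    fix s
    have "(d has_derivative (\<lambda>h. h *\<^sub>R e s)) (at s)"
      unfolding d_def e_def using x[of s] y[of s]
      by (auto intro!: derivative_eq_intros simp: has_vector_derivative_def algebra_simps)
    from has_derivative_inner[OF this this]
    show "((\<lambda>s. d s \<bullet> d s) has_real_derivative 2 * (d s \<bullet> e s)) (at s)"
      unfolding has_field_derivative_def
      by (rule has_derivative_eq_rhs) (auto simp: inner_commute algebra_simps)
    show "d s \<bullet> d s \<ge> 0" by simp
    assume "\<bar>s\<bar> \<le> \<bar>t\<bar>"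
    then have s: "s \<in> {-T..T}" by (simp add: T_def abs_le_iff)
    have "norm (e s) \<le> L * norm (d s)"
      using lipschitz_onD[OF L[OF s]] R[OF s] by (simp add: e_def d_def dist_norm)
    then have "\<bar>d s \<bullet> e s\<bar> \<le> norm (d s) * (L * norm (d s))"
      using Cauchy_Schwarz_ineq2[of "d s" "e s"] by (meson mult_left_mono norm_ge_zero order_trans)
    then show "\<bar>2 * (d s \<bullet> e s)\<bar> \<le> 2 * L * (d s \<bullet> d s)"
      by (simp add: power2_norm_eq_inner[symmetric] power2_eq_square algebra_simps)
  qed (simp add: d_def \<open>x 0 = y 0\<close>)
  then show "x t = y t" by (simp add: d_def)
qed

lemma zero_differentiable_linear_bound:
  fixes b :: "real \<Rightarrow> real"
  assumes zero: "b y0 = 0" and diff: "b differentiable (at y0)"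
  obtains L s where "L > 0" "s > 0" "\<And>y. y0 \<le> y \<Longrightarrow> y - y0 < s \<Longrightarrow> \<bar>b y\<bar> \<le> L * (y - y0)"
proof -
  obtain L0 where "(b has_real_derivative L0) (at y0)"
    using diff DERIV_deriv_iff_real_differentiable by blast
  then have "((\<lambda>y. b y / (y - y0)) \<midarrow>y0\<rightarrow> L0)"
    unfolding has_field_derivative_iff using zero by simp
  from LIM_D[OF this, of 1] obtain s where "s > 0"
    and s: "\<And>y. y \<noteq> y0 \<Longrightarrow> norm (y - y0) < s \<Longrightarrow> \<bar>b y / (y - y0) - L0\<bar> < 1"
    by auto
  have "\<bar>b y\<bar> \<le> (\<bar>L0\<bar> + 1) * (y - y0)" if "y0 \<le> y" "y - y0 < s" for y
  proof (cases "y = y0")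
    case False
    then have "y - y0 > 0" using that by simp
    moreover have "\<bar>b y / (y - y0)\<bar> \<le> \<bar>L0\<bar> + 1" using s[OF False] that by simp
    ultimately show ?thesis by (simp add: abs_divide divide_le_eq)
  qed (simp add: zero)
  moreover have "\<bar>L0\<bar> + 1 > 0" by (simp add: add_nonneg_pos)
  ultimately show ?thesis using that \<open>s > 0\<close> by blast
qed

lemma reciprocal_antiderivative_log_lower_bound:
  fixes b \<Theta> :: "real \<Rightarrow> real"
  assumes bound: "\<And>y. y0 \<le> y \<Longrightarrow> y \<le> y0 + r \<Longrightarrow> \<bar>b y\<bar> \<le> L * (y - y0)"
    and "L > 0" "\<delta> > 0" "r \<ge> 0"
    and \<Theta>: "\<And>y. (\<Theta> has_real_derivative 1 / (\<bar>b y\<bar> + \<delta>)) (at y)"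
  shows "\<Theta> (y0 + r) - \<Theta> y0 \<ge> ln ((L * r + \<delta>) / \<delta>) / L"
proof -
  \<comment> \<open>\<open>ln (L (y - y0) + \<delta>) / L\<close> is an antiderivative of the smaller function \<open>1 / (L (y - y0) + \<delta>)\<close>.\<close>
  define F where "F y = \<Theta> y - ln (L * (y - y0) + \<delta>) / L" for y
  have "F y0 \<le> F (y0 + r)"
  proof (rule DERIV_nonneg_imp_nondecreasing[where f = F])
    fix y assume y: "y0 \<le> y" "y \<le> y0 + r"
    have pos: "L * (y - y0) + \<delta> > 0" using y \<open>L > 0\<close> \<open>\<delta> > 0\<close> by (simp add: add_nonneg_pos)
    have "((\<lambda>y. L * (y - y0) + \<delta>) has_real_derivative L) (at y)"
      by (auto intro!: derivative_eq_intros)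
    from DERIV_cdivide[OF DERIV_chain'[OF this DERIV_ln_divide[OF pos]], of L]
    have "((\<lambda>y. ln (L * (y - y0) + \<delta>) / L) has_real_derivative 1 / (L * (y - y0) + \<delta>)) (at y)"
      using \<open>L > 0\<close> by simp
    from DERIV_diff[OF \<Theta> this]
    have "(F has_real_derivative 1 / (\<bar>b y\<bar> + \<delta>) - 1 / (L * (y - y0) + \<delta>)) (at y)"
      unfolding F_def .
    moreover have "1 / (L * (y - y0) + \<delta>) \<le> 1 / (\<bar>b y\<bar> + \<delta>)"
      using bound[OF y] \<open>\<delta> > 0\<close> by (intro divide_left_mono) (auto simp: add_pos_nonneg)
    ultimately show "\<exists>d. (F has_real_derivative d) (at y) \<and> 0 \<le> d" by force
  qed (use \<open>r \<ge> 0\<close> in simp)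
  moreover have "ln ((L * r + \<delta>) / \<delta>) = ln (L * r + \<delta>) - ln \<delta>"
    using \<open>\<delta> > 0\<close> \<open>L > 0\<close> \<open>r \<ge> 0\<close> by (intro ln_divide_pos) (auto intro: add_nonneg_pos)
  ultimately show ?thesis by (simp add: F_def diff_divide_distrib)
qed

lemma reciprocal_antiderivative_unbounded_at_zero:
  fixes b :: "real \<Rightarrow> real"
  assumes "b y0 = 0" and "b differentiable (at y0)" and "h > 0"
  shows "\<exists>\<delta>>0. \<forall>\<Theta>. (\<forall>y. (\<Theta> has_real_derivative 1 / (\<bar>b y\<bar> + \<delta>)) (at y)) \<longrightarrow> \<Theta> (y0 + h) - \<Theta> y0 > M"
proof -
  obtain L s where "L > 0" "s > 0" and linear_bound: "\<And>y. y0 \<le> y \<Longrightarrow> y - y0 < s \<Longrightarrow> \<bar>b y\<bar> \<le> L * (y - y0)"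
    using zero_differentiable_linear_bound[OF assms(1,2)] by blast
  define r where "r = min (s / 2) h"
  have r: "r > 0" "r < s" "r \<le> h" using \<open>s > 0\<close> \<open>h > 0\<close> by (auto simp: r_def)
  define \<delta> where "\<delta> = L * r / exp (L * M)"
  have "\<delta> > 0" using \<open>L > 0\<close> r by (simp add: \<delta>_def)
  have "\<Theta> (y0 + h) - \<Theta> y0 > M" if \<Theta>: "\<And>y. (\<Theta> has_real_derivative 1 / (\<bar>b y\<bar> + \<delta>)) (at y)" for \<Theta>
  proof -
    have "L * M < ln (exp (L * M) + 1)"
      using ln_less_cancel_iff[of "exp (L * M)" "exp (L * M) + 1"] by (simp add: add_pos_pos)
    also have "exp (L * M) + 1 = (L * r + \<delta>) / \<delta>"
      using \<open>\<delta> > 0\<close> \<open>L > 0\<close> r by (simp add: \<delta>_def field_simps)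
    finally have "M < ln ((L * r + \<delta>) / \<delta>) / L"
      using \<open>L > 0\<close> by (simp add: less_divide_eq mult.commute)
    also have "\<dots> \<le> \<Theta> (y0 + r) - \<Theta> y0"
      using linear_bound r \<open>L > 0\<close> \<open>\<delta> > 0\<close> \<Theta> by (intro reciprocal_antiderivative_log_lower_bound) auto
    finally have "M < \<Theta> (y0 + r) - \<Theta> y0" .
    moreover have "\<Theta> (y0 + r) \<le> \<Theta> (y0 + h)"
      using r \<Theta> \<open>\<delta> > 0\<close>
      by (intro DERIV_nonneg_imp_nondecreasing[of "y0 + r" "y0 + h" \<Theta>]) (auto intro!: exI add_pos_nonneg)
    ultimately show ?thesis by simp
  qed
  then show ?thesis using \<open>\<delta> > 0\<close> by blast
qed

lemma reciprocal_antiderivative_perturb: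
  fixes g \<tau> :: "real \<Rightarrow> real"
  assumes "a \<le> b" and cont: "continuous_on {a..b} g" and pos: "\<And>y. y \<in> {a..b} \<Longrightarrow> g y > 0"
    and \<tau>: "\<And>y. (\<tau> has_real_derivative 1 / g y) (at y)"
    and gt: "\<tau> b - \<tau> a > M" and "M \<ge> 0"
  shows "\<exists>\<delta>>0. \<forall>\<Theta>. (\<forall>y. (\<Theta> has_real_derivative 1 / (g y + \<delta>)) (at y)) \<longrightarrow> \<Theta> b - \<Theta> a > M"
proof -
  obtain y0 where "y0 \<in> {a..b}" and min: "\<And>y. y \<in> {a..b} \<Longrightarrow> g y0 \<le> g y"
    using continuous_attains_inf[OF compact_Icc _ cont] \<open>a \<le> b\<close> by auto
  define m where "m = g y0"
  have "m > 0" using pos \<open>y0 \<in> {a..b}\<close> by (simp add: m_def)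
  define I where "I = \<tau> b - \<tau> a"
  have "I > 0" using gt \<open>M \<ge> 0\<close> by (simp add: I_def)
  \<comment> \<open>With this \<open>\<delta>\<close> one has \<open>1 / (g + \<delta>) \<ge> c / g\<close> for \<open>c = 1 - \<delta> / m = (I + M) / (2 I)\<close>.\<close>
  define \<delta> where "\<delta> = m * (I - M) / (2 * I)"
  define c where "c = 1 - \<delta> / m"
  have "\<delta> > 0" using \<open>m > 0\<close> \<open>I > 0\<close> gt by (simp add: \<delta>_def I_def)
  have "\<Theta> b - \<Theta> a > M" if \<Theta>: "\<And>y. (\<Theta> has_real_derivative 1 / (g y + \<delta>)) (at y)" for \<Theta>
  proof -
    have "\<Theta> a - c * \<tau> a \<le> \<Theta> b - c * \<tau> b"
    proof (rule DERIV_nonneg_imp_nondecreasing[OF \<open>a \<le> b\<close>, where f = "\<lambda>y. \<Theta> y - c * \<tau> y"])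
      fix y assume "a \<le> y" "y \<le> b"
      then have "m \<le> g y" "g y > 0" using min pos by (auto simp: m_def)
      then have "\<delta> * m \<le> \<delta> * (g y + \<delta>)"
        using \<open>\<delta> > 0\<close> by (intro mult_left_mono) auto
      then have "(m - \<delta>) * (g y + \<delta>) \<le> m * g y" by (simp add: algebra_simps)
      then have "c * (1 / g y) \<le> 1 / (g y + \<delta>)"
        using \<open>m > 0\<close> \<open>g y > 0\<close> \<open>\<delta> > 0\<close> by (simp add: c_def field_simps)
      moreover have "((\<lambda>y. \<Theta> y - c * \<tau> y) has_real_derivative 1 / (g y + \<delta>) - c * (1 / g y)) (at y)"
        by (intro DERIV_diff \<Theta> DERIV_cmult \<tau>)
      ultimately show "\<exists>d. ((\<lambda>y. \<Theta> y - c * \<tau> y) has_real_derivative d) (at y) \<and> 0 \<le> d"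
        by force
    qed
    then have "\<Theta> b - \<Theta> a \<ge> c * I" by (simp add: I_def algebra_simps)
    moreover have "c * I = (I + M) / 2"
      using \<open>m > 0\<close> \<open>I > 0\<close> by (simp add: c_def \<delta>_def field_simps)
    ultimately show ?thesis using gt by (simp add: I_def)
  qed
  then show ?thesis using \<open>\<delta> > 0\<close> by blast
qed

lemma angle_increment_lt_period:
  fixes \<phi> \<phi>' \<beta> \<Theta> :: "real \<Rightarrow> real"
  assumes \<phi>: "\<And>t. t \<in> {0..1} \<Longrightarrow> (\<phi> has_real_derivative \<phi>' t) (at t within {0..1})"
    and speed: "\<And>t. t \<in> {0..1} \<Longrightarrow> \<bar>\<phi>' t\<bar> \<le> \<beta> (\<phi> t)"
    and \<beta>: "\<And>y. \<beta> y > 0"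
    and \<Theta>: "\<And>y. (\<Theta> has_real_derivative 1 / \<beta> y) (at y)"
    and increment: "\<And>y. \<Theta> (y + p) - \<Theta> y > 1"
  shows "\<bar>\<phi> 1 - \<phi> 0\<bar> < p"
proof -
  \<comment> \<open>\<open>\<Theta> \<circ> \<phi>\<close> moves with speed at most 1, so it cannot cover a full period of \<open>\<Theta>\<close>.\<close>
  have "norm (\<Theta> (\<phi> 1) - \<Theta> (\<phi> 0)) \<le> 1 * norm (1 - 0 :: real)"
  proof (rule field_differentiable_bound[where f' = "\<lambda>t. 1 / \<beta> (\<phi> t) * \<phi>' t"])
    show "((\<lambda>t. \<Theta> (\<phi> t)) has_real_derivative 1 / \<beta> (\<phi> t) * \<phi>' t) (at t within {0..1})"
      if "t \<in> {0..1}" for t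
      by (rule DERIV_chain'[OF \<phi>[OF that] \<Theta>])
    show "norm (1 / \<beta> (\<phi> t) * \<phi>' t) \<le> 1" if "t \<in> {0..1}" for t
      using speed[OF that] \<beta>[of "\<phi> t"] by (simp add: abs_mult divide_le_eq)
  qed auto
  then have bound: "\<bar>\<Theta> (\<phi> 1) - \<Theta> (\<phi> 0)\<bar> \<le> 1" by simp
  have mono: "\<Theta> a \<le> \<Theta> b" if "a \<le> b" for a b
    using that \<Theta> \<beta> by (intro DERIV_nonneg_imp_nondecreasing[of a b \<Theta>]) (auto intro!: exI less_imp_le)
  show ?thesis
  proof (rule ccontr)
    assume "\<not> ?thesis"
    then consider "\<phi> 0 + p \<le> \<phi> 1" | "\<phi> 1 + p \<le> \<phi> 0" by linarith
    then show False
    proof cases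
      case 1
      then show False using mono[OF 1] increment[of "\<phi> 0"] bound by linarith
    next
      case 2
      then show False using mono[OF 2] increment[of "\<phi> 1"] bound by linarith
    qed
  qed
qed

section \<open>Hamiltonian vector fields and the boundary circle\<close>

lemma hamvf_eq_Complex:
  assumes "(H t has_derivative D) (at z)"
  shows "hamvf H t z = Complex (D \<i>) (- D 1)"
proof -
  have fd: "frechet_derivative (H t) (at z) = D"
    using frechet_derivative_at[OF assms] by simp
  have lin: "linear D" using assms has_derivative_linear by blast
  have omega: "D w = omega (Complex (D \<i>) (- D 1)) w" for w
    using linear_complex_to_real_eq[OF lin, of w] by (simp add: omega_def mult.commute)
  have unique: "v = Complex (D \<i>) (- D 1)" if "\<forall>w. D w = omega v w" for v
  proof -
    have "D 1 = omega v 1" "D \<i> = omega v \<i>" using that by auto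
    then show ?thesis by (simp add: omega_def complex_eq_iff)
  qed
  show ?thesis unfolding hamvf_def fd
    by (rule the_equality) (use omega unique in blast)+
qed

lemma Im_cnj_mult_hamvf:
  assumes "(H t has_derivative D) (at z)"
  shows "Im (cnj w * hamvf H t z) = - D w"
  using hamvf_eq_Complex[of H t D z, OF assms] linear_complex_to_real_eq[OF has_derivative_linear[OF assms], of w]
  by (simp add: algebra_simps)

locale boundary_hamiltonian =
  fixes H :: "real \<Rightarrow> complex \<Rightarrow> real"
  assumes smooth_H: "smooth (\<lambda>p::real \<times> complex. H (fst p) (snd p))"
    and H_boundary: "\<And>t z. norm z = 1 \<Longrightarrow> H t z = 0"
    and X_autonomous: "\<And>t s z. norm z = 1 \<Longrightarrow> hamvf H t z = hamvf H s z"
begin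

definition Hx :: "real \<times> complex \<Rightarrow> real" where
  "Hx p = frechet_derivative (\<lambda>p. H (fst p) (snd p)) (at p) (0, 1)"

definition Hy :: "real \<times> complex \<Rightarrow> real" where
  "Hy p = frechet_derivative (\<lambda>p. H (fst p) (snd p)) (at p) (0, \<i>)"

definition dH :: "real \<Rightarrow> complex \<Rightarrow> complex \<Rightarrow> real" where
  "dH t z w = Re w * Hx (t, z) + Im w * Hy (t, z)"

lemma smooth_Hx: "smooth Hx" and smooth_Hy: "smooth Hy"
  unfolding Hx_def[abs_def] Hy_def[abs_def] using smooth_H by (auto intro: smooth_frechet_derivative)

lemma dH_has_derivative: "(H t has_derivative dH t z) (at z)"
proof -
  have "((\<lambda>z. (t, z)) has_derivative (\<lambda>w. (0, w))) (at z)" by (auto intro!: derivative_eq_intros)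
  from diff_chain_at[OF this smooth_has_derivative[OF smooth_H]]
  have D: "(H t has_derivative (\<lambda>w. frechet_derivative (\<lambda>p. H (fst p) (snd p)) (at (t, z)) (0, w))) (at z)"
    by (simp add: o_def)
  moreover have "(\<lambda>w. frechet_derivative (\<lambda>p. H (fst p) (snd p)) (at (t, z)) (0, w)) = dH t z"
  proof
    fix w
    show "frechet_derivative (\<lambda>p. H (fst p) (snd p)) (at (t, z)) (0, w) = dH t z w"
      using linear_complex_to_real_eq[OF has_derivative_linear[OF D], of w] by (simp add: dH_def Hx_def Hy_def)
  qed
  ultimately show ?thesis by simp
qed

lemma linear_dH: "linear (dH t z)"
  using dH_has_derivative has_derivative_linear by blast

lemma hamvf_eq: "hamvf H t z = Complex (Hy (t, z)) (- Hx (t, z))"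
  using hamvf_eq_Complex[of H t "dH t z" z, OF dH_has_derivative] by (simp add: dH_def)

lemma dH_tangent_eq_0:
  assumes "norm u = 1"
  shows "dH t u (\<i> * u) = 0"
proof -
  define a where "a = Arg u"
  have "u \<noteq> 0" using assms by auto
  then have u: "u = cis a" using cis_Arg[of u] assms by (simp add: a_def sgn_div_norm)
  have "((\<lambda>s. cis s) has_derivative (\<lambda>h. h *\<^sub>R (\<i> * cis a))) (at a)"
    using has_derivative_cis[OF has_derivative_ident[of "at a"]] by simp
  from diff_chain_at[OF this dH_has_derivative]
  have "((\<lambda>s. H t (cis s)) has_derivative (\<lambda>h. dH t (cis a) (h *\<^sub>R (\<i> * cis a)))) (at a)"
    by (simp add: o_def)
  moreover have "(\<lambda>s. H t (cis s)) = (\<lambda>_. 0)" by (auto simp: H_boundary)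
  ultimately have "((\<lambda>_. 0) has_derivative (\<lambda>h. dH t (cis a) (h *\<^sub>R (\<i> * cis a)))) (at a)"
    by simp
  from has_derivative_unique[OF this has_derivative_const]
  have "(\<lambda>h. dH t (cis a) (h *\<^sub>R (\<i> * cis a))) = (\<lambda>_. 0)" .
  from fun_cong[OF this, of 1] show ?thesis using u by simp
qed

lemma dH_autonomous:
  assumes "norm u = 1"
  shows "dH t u = dH 0 u"
  using X_autonomous[OF assms, of t 0] by (auto simp: hamvf_eq dH_def)

lemma dH_circle:
  assumes "norm u = 1"
  shows "dH t u w = Re (cnj u * w) * dH 0 u u"
proof -
  define c where "c = cnj u * w"
  have "cnj u * u = 1" using complex_norm_square[of u] assms by (simp add: mult.commute)
  moreover have "c * u = w * (cnj u * u)" by (simp add: c_def algebra_simps)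
  ultimately have "w = c * u" by simp
  also have "\<dots> = Re c *\<^sub>R u + Im c *\<^sub>R (\<i> * u)"
    by (simp add: complex_eq_iff scaleR_conv_of_real)
  finally have w: "w = Re c *\<^sub>R u + Im c *\<^sub>R (\<i> * u)" .
  have "dH t u w = Re c * dH t u u + Im c * dH t u (\<i> * u)"
    using linear_dH[of t u] by (subst w) (simp add: linear_add linear_scale)
  also have "\<dots> = Re c * dH 0 u u" using dH_tangent_eq_0[OF assms] dH_autonomous[OF assms, of t] by simp
  finally show ?thesis by (simp add: c_def)
qed

text \<open>By \<open>hamvf_circle\<close> the boundary flow turns with angular velocity \<open>- radial_deriv\<close>; the time
  \<open>0\<close> is arbitrary by \<open>dH_autonomous\<close>.\<close>
definition radial_deriv :: "real \<Rightarrow> real" where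
  "radial_deriv \<phi> = dH 0 (cis \<phi>) (cis \<phi>)"

lemma hamvf_circle: "hamvf H t (cis \<phi>) = - \<i> * of_real (radial_deriv \<phi>) * cis \<phi>"
proof -
  have "Hx (t, cis \<phi>) = cos \<phi> * radial_deriv \<phi>" "Hy (t, cis \<phi>) = sin \<phi> * radial_deriv \<phi>"
    using dH_circle[of "cis \<phi>" t 1] dH_circle[of "cis \<phi>" t \<i>]
    by (simp_all add: dH_def radial_deriv_def)
  then show ?thesis by (simp add: hamvf_eq complex_eq_iff)
qed

lemma radial_deriv_periodic: "radial_deriv (\<phi> + 2 * pi) = radial_deriv \<phi>"
  by (simp add: radial_deriv_def cis.ctr)

lemma radial_deriv_differentiable: "radial_deriv differentiable (at y)"
proof -
  have "(\<lambda>\<phi>. (0::real, cis \<phi>)) differentiable (at y)"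
    by (rule differentiableI, rule has_derivative_Pair[OF has_derivative_const has_derivative_cis[OF has_derivative_ident]])
  moreover have "Hx differentiable (at p)" "Hy differentiable (at p)" for p
    using smooth_Hx smooth_Hy by (metis smoothE differentiableI)+
  ultimately have "(Hx \<circ> (\<lambda>\<phi>. (0, cis \<phi>))) differentiable (at y)" "(Hy \<circ> (\<lambda>\<phi>. (0, cis \<phi>))) differentiable (at y)"
    by (auto intro: differentiable_chain_at)
  then have "(\<lambda>\<phi>. Hx (0, cis \<phi>)) differentiable (at y)" "(\<lambda>\<phi>. Hy (0, cis \<phi>)) differentiable (at y)"
    by (simp_all add: o_def)
  moreover have "(\<lambda>\<phi>. cos \<phi>) differentiable (at y)" "(\<lambda>\<phi>. sin \<phi>) differentiable (at y)"
    using DERIV_cos[of y] DERIV_sin[of y] by (auto simp: has_field_derivative_def differentiable_def)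
  ultimately show ?thesis unfolding radial_deriv_def[abs_def] dH_def
    by (auto intro!: differentiable_add differentiable_mult)
qed

lemma isCont_radial_deriv: "isCont radial_deriv y"
  using radial_deriv_differentiable differentiable_imp_continuous_within by blast

lemma radial_deriv_sgn:
  assumes nz: "\<And>y. radial_deriv y \<noteq> 0"
  shows "sgn (radial_deriv y) = sgn (radial_deriv 0)"
proof -
  have cont: "continuous_on S radial_deriv" for S
    by (simp add: continuous_at_imp_continuous_on isCont_radial_deriv)
  have False if "radial_deriv a > 0" "radial_deriv b < 0" for a b
  proof -
    have signs: "radial_deriv b \<le> 0" "0 \<le> radial_deriv a" using that by auto
    consider "a \<le> b" | "b \<le> a" by linarith
    then obtain x where "radial_deriv x = 0"
    proof cases
      case 1
      from IVT2'[of radial_deriv b 0 a, OF signs 1 cont] show ?thesis using that by blast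
    next
      case 2
      from IVT'[of radial_deriv b 0 a, OF signs 2 cont] show ?thesis using that by blast
    qed
    then show False using nz by blast
  qed
  then show ?thesis using nz[of y] nz[of 0] by (metis linorder_neqE_linordered_idom sgn_neg sgn_pos)
qed

lemma hamvf_lipschitz: "\<exists>L. \<forall>s\<in>{-T..T}. L-lipschitz_on (cball 0 R) (hamvf H s)"
proof -
  obtain Lx where Lx: "\<forall>s\<in>{-T..T}. Lx-lipschitz_on (cball 0 R) (\<lambda>z. Hx (s, z))"
    using smooth_lipschitz_on_snd[OF smooth_Hx] by blast
  obtain Ly where Ly: "\<forall>s\<in>{-T..T}. Ly-lipschitz_on (cball 0 R) (\<lambda>z. Hy (s, z))"
    using smooth_lipschitz_on_snd[OF smooth_Hy] by blast
  have "(Ly + Lx)-lipschitz_on (cball 0 R) (hamvf H s)" if s: "s \<in> {-T..T}" for s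
  proof (rule lipschitz_onI)
    fix z w :: complex assume zw: "z \<in> cball 0 R" "w \<in> cball 0 R"
    have "dist (hamvf H s z) (hamvf H s w) \<le> \<bar>Hy (s, z) - Hy (s, w)\<bar> + \<bar>Hx (s, z) - Hx (s, w)\<bar>"
      using cmod_le[of "hamvf H s z - hamvf H s w"] by (simp add: dist_norm hamvf_eq abs_minus_commute)
    also have "\<dots> \<le> Ly * dist z w + Lx * dist z w"
      using lipschitz_onD[OF Lx[rule_format, OF s] zw] lipschitz_onD[OF Ly[rule_format, OF s] zw]
      by (intro add_mono) (auto simp: dist_real_def)
    finally show "dist (hamvf H s z) (hamvf H s w) \<le> (Ly + Lx) * dist z w" by (simp add: algebra_simps)
  next
    show "0 \<le> Ly + Lx" using lipschitz_on_nonneg Lx Ly s by (meson add_nonneg_nonneg)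
  qed
  then show ?thesis by blast
qed

lemma flow_eq:
  assumes "\<And>s. (x has_vector_derivative hamvf H s (x s)) (at s)"
  shows "flow H t (x 0) = x t"
proof -
  have "(THE y. y 0 = x 0 \<and> (\<forall>s. (y has_vector_derivative hamvf H s (y s)) (at s))) = x"
  proof (rule the_equality)
    fix y assume "y 0 = x 0 \<and> (\<forall>s. (y has_vector_derivative hamvf H s (y s)) (at s))"
    then show "y = x" using assms ode_solution_unique[of "hamvf H", OF hamvf_lipschitz] by metis
  qed (use assms in simp)
  then show ?thesis by (simp add: flow_def)
qed

end

section \<open>The rotation number of the boundary flow\<close>

locale nonvanishing_boundary_hamiltonian = boundary_hamiltonian +
  fixes P :: "real \<Rightarrow> real"
  assumes radial_deriv_nonzero: "\<And>y. radial_deriv y \<noteq> 0"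
    and P_deriv: "\<And>y. (P has_real_derivative 1 / radial_deriv y) (at y)"
    and P_0: "P 0 = 0"
begin

text \<open>Along the boundary flow \<open>P\<close> decreases at unit rate, so the angle grows by \<open>2 * pi\<close> in
  time \<open>- period\<close>.\<close>
definition period :: real where
  "period = P (2 * pi)"

definition \<tau> :: "real \<Rightarrow> real" where
  "\<tau> y = sgn (radial_deriv 0) * P y"

lemma \<tau>_deriv: "(\<tau> has_real_derivative 1 / \<bar>radial_deriv y\<bar>) (at y)"
proof -
  have "(\<tau> has_real_derivative sgn (radial_deriv 0) * (1 / radial_deriv y)) (at y)"
    unfolding \<tau>_def[abs_def] by (rule DERIV_cmult[OF P_deriv])
  moreover have "sgn (radial_deriv 0) * (1 / radial_deriv y) = 1 / \<bar>radial_deriv y\<bar>"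
    unfolding radial_deriv_sgn[OF radial_deriv_nonzero, of y, symmetric]
    using radial_deriv_nonzero[of y] by (simp add: sgn_if abs_if)
  ultimately show ?thesis by simp
qed

lemma \<tau>_strict_mono: "a < b \<Longrightarrow> \<tau> a < \<tau> b"
  by (rule DERIV_pos_imp_increasing) (use \<tau>_deriv radial_deriv_nonzero in \<open>auto intro!: exI\<close>)

lemma inj_P: "inj P"
proof (rule injI)
  fix a b assume "P a = P b"
  then have "\<tau> a = \<tau> b" by (simp add: \<tau>_def)
  then show "a = b" using \<tau>_strict_mono[of a b] \<tau>_strict_mono[of b a] by fastforce
qed

lemma P_periodic: "P (y + 2 * pi) = P y + period"
  using antiderivative_periodic_increment[OF P_deriv, of "2 * pi" y 0] radial_deriv_periodic
  by (simp add: period_def P_0)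

lemma abs_period: "\<bar>period\<bar> = \<tau> (2 * pi) - \<tau> 0"
proof -
  have "\<tau> (2 * pi) - \<tau> 0 = sgn (radial_deriv 0) * period" by (simp add: \<tau>_def period_def P_0)
  moreover have "\<tau> (2 * pi) - \<tau> 0 > 0" using \<tau>_strict_mono[of 0 "2 * pi"] by simp
  moreover have "\<bar>sgn (radial_deriv 0) * period\<bar> = \<bar>period\<bar>"
    using radial_deriv_nonzero[of 0] by (simp add: abs_mult)
  ultimately show ?thesis by simp
qed

lemma period_nonzero: "period \<noteq> 0"
  using abs_period \<tau>_strict_mono[of 0 "2 * pi"] by auto

lemma P_shift: "P (y + 2 * pi * real n) = P y + real n * period"
proof (induction n)
  case (Suc n)
  have "P (y + 2 * pi * real (Suc n)) = P ((y + 2 * pi * real n) + 2 * pi)" by (simp add: algebra_simps)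
  also have "\<dots> = P (y + 2 * pi * real n) + period" by (rule P_periodic)
  also have "\<dots> = P y + real n * period + period" by (simp only: Suc.IH)
  also have "\<dots> = P y + real (Suc n) * period" by (simp add: algebra_simps)
  finally show ?case .
qed simp

lemma surj_P: "surj P"
proof -
  have "z \<in> range P" for z
  proof -
    obtain n :: nat where "\<bar>z\<bar> / \<bar>period\<bar> \<le> real n" using real_arch_simple by blast
    then have n: "\<bar>z\<bar> \<le> real n * \<bar>period\<bar>" using period_nonzero by (simp add: divide_le_eq)
    have P_n: "P (2 * pi * real n) = real n * period" "P (- (2 * pi * real n)) = - (real n * period)"
      using P_shift[of 0 n] P_shift[of "- (2 * pi * real n)" n] by (simp_all add: P_0)
    have cont: "continuous_on S P" for S
      using P_deriv by (auto intro!: continuous_at_imp_continuous_on DERIV_isCont)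
    have le: "- (2 * pi * real n) \<le> 2 * pi * real n" by simp
    show ?thesis
    proof (cases "period > 0")
      case True
      then have "P (- (2 * pi * real n)) \<le> z" "z \<le> P (2 * pi * real n)"
        using n P_n by (auto simp: abs_le_iff)
      then show ?thesis using IVT'[OF _ _ le cont] by blast
    next
      case False
      then have "P (2 * pi * real n) \<le> z" "z \<le> P (- (2 * pi * real n))"
        using n P_n period_nonzero by (auto simp: abs_le_iff)
      then show ?thesis using IVT2'[OF _ _ le cont] by blast
    qed
  qed
  then show ?thesis by blast
qed

definition Q :: "real \<Rightarrow> real" where
  "Q = inv P"

lemma P_Q: "P (Q z) = z"
  unfolding Q_def by (meson surj_P surj_f_inv_f)

lemma Q_P: "Q (P y) = y"
  unfolding Q_def by (meson inj_P inv_f_f)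

lemma Q_0: "Q 0 = 0"
  using Q_P[of 0] P_0 by simp

lemma Q_periodic: "Q (z + period) = Q z + 2 * pi"
  using Q_P[of "Q z + 2 * pi"] P_periodic[of "Q z"] P_Q[of z] by simp

lemma isCont_Q: "isCont Q z"
proof -
  have "isCont Q (P (Q z))"
    by (rule isCont_inverse_function[where d = 1]) (auto simp: Q_P intro: DERIV_isCont[OF P_deriv])
  then show ?thesis by (simp add: P_Q)
qed

lemma Q_deriv: "(Q has_real_derivative radial_deriv (Q z)) (at z)"
  using DERIV_inverse_function[where f = P and g = Q and x = z and D = "1 / radial_deriv (Q z)"
      and a = "z - 1" and b = "z + 1"]
  by (auto simp: P_Q P_deriv isCont_Q radial_deriv_nonzero)

definition boundary_angle :: "real \<Rightarrow> real \<Rightarrow> real" where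
  "boundary_angle s t = Q (P (2 * pi * s) - t)"

lemma boundary_angle_0: "boundary_angle s 0 = 2 * pi * s"
  by (simp add: boundary_angle_def Q_P)

lemma boundary_angle_deriv: "(boundary_angle s has_real_derivative - radial_deriv (boundary_angle s t)) (at t)"
proof -
  have "((\<lambda>t. P (2 * pi * s) - t) has_real_derivative -1) (at t)" by (auto intro!: derivative_eq_intros)
  from DERIV_chain'[OF this Q_deriv] show ?thesis by (simp add: boundary_angle_def[abs_def])
qed

lemma continuous_on_boundary_angle: "continuous_on S (boundary_angle s)"
  using boundary_angle_deriv by (auto intro!: continuous_at_imp_continuous_on DERIV_isCont)

lemma flow_circle: "flow H t (cis (2 * pi * s)) = cis (boundary_angle s t)"
proof -
  have "((\<lambda>t. cis (boundary_angle s t)) has_vector_derivative hamvf H t (cis (boundary_angle s t))) (at t)" for t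
    using has_derivative_cis[OF boundary_angle_deriv[unfolded has_field_derivative_def]]
    by (simp add: has_vector_derivative_def hamvf_circle scaleR_conv_of_real algebra_simps)
  from flow_eq[OF this] show ?thesis by (simp add: boundary_angle_0)
qed

lemma boundary_lift_eq: "boundary_lift H s = boundary_angle s 1 / (2 * pi)"
  unfolding boundary_lift_def
proof (rule the_equality)
  fix y assume "\<exists>\<theta>. continuous_on {0..1} \<theta> \<and> \<theta> 0 = s
      \<and> (\<forall>t\<in>{0..1}. flow H t (cis (2 * pi * s)) = cis (2 * pi * \<theta> t)) \<and> y = \<theta> 1"
  then obtain \<theta> where "continuous_on {0..1} \<theta>" "\<theta> 0 = s" "y = \<theta> 1"
    and lift: "\<forall>t\<in>{0..1}. flow H t (cis (2 * pi * s)) = cis (2 * pi * \<theta> t)" by blast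
  moreover have "(\<lambda>t. 2 * pi * \<theta> t) 1 - (\<lambda>t. 2 * pi * \<theta> t) 0 = boundary_angle s 1 - boundary_angle s 0"
  proof (rule angle_lift_unique[of "{0..1}"])
    show "continuous_on {0..1} (\<lambda>t. 2 * pi * \<theta> t)"
      by (intro continuous_intros) fact
    show "cis (2 * pi * \<theta> t) = cis (boundary_angle s t)" if "t \<in> {0..1}" for t
      using lift that flow_circle by metis
  qed (auto intro: continuous_on_boundary_angle)
  ultimately show "y = boundary_angle s 1 / (2 * pi)" by (simp add: boundary_angle_0 field_simps)
next
  show "\<exists>\<theta>. continuous_on {0..1} \<theta> \<and> \<theta> 0 = s
      \<and> (\<forall>t\<in>{0..1}. flow H t (cis (2 * pi * s)) = cis (2 * pi * \<theta> t)) \<and> boundary_angle s 1 / (2 * pi) = \<theta> 1"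
    by (intro exI[of _ "\<lambda>t. boundary_angle s t / (2 * pi)"] conjI ballI continuous_on_divide
        continuous_on_boundary_angle continuous_on_const) (auto simp: boundary_angle_0 flow_circle)
qed

lemma boundary_lift_iterate: "(boundary_lift H ^^ k) 0 = Q (- real k) / (2 * pi)"
proof (induction k)
  case (Suc k)
  have "(boundary_lift H ^^ Suc k) 0 = boundary_lift H (Q (- real k) / (2 * pi))" using Suc by simp
  also have "\<dots> = Q (P (Q (- real k)) - 1) / (2 * pi)" by (simp add: boundary_lift_eq boundary_angle_def)
  also have "P (Q (- real k)) - 1 = - real (Suc k)" by (simp add: P_Q)
  finally show ?case .
qed (simp add: Q_0)

lemma rotation_number_eq: "rotation_number H = - 1 / period"
proof -
  define g where "g z = Q z - 2 * pi * z / period" for z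
  have "bounded (range g)"
  proof (rule periodic_continuous_bounded[OF _ _ period_nonzero])
    have "continuous_on UNIV Q" by (simp add: continuous_at_imp_continuous_on isCont_Q)
    then show "continuous_on UNIV g"
      unfolding g_def using period_nonzero by (auto intro!: continuous_intros)
    show "g (z + period) = g z" for z
      using period_nonzero by (simp add: g_def Q_periodic field_simps)
  qed
  then obtain C where C: "\<And>z. \<bar>g z\<bar> \<le> C" unfolding bounded_iff by auto
  have "(\<lambda>k. g (- real k) / (2 * pi * real k)) \<longlonglongrightarrow> 0"
  proof (rule Lim_null_comparison)
    show "\<forall>\<^sub>F k in sequentially. norm (g (- real k) / (2 * pi * real k)) \<le> C / (2 * pi) / real k"
      using C by (intro always_eventually allI) (simp add: abs_divide divide_right_mono field_simps)
  qed (rule lim_const_over_n)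
  from tendsto_add[OF tendsto_const[of "- 1 / period"] this]
  have "(\<lambda>k. - 1 / period + g (- real k) / (2 * pi * real k)) \<longlonglongrightarrow> - 1 / period" by simp
  moreover have "\<forall>\<^sub>F k in sequentially.
      - 1 / period + g (- real k) / (2 * pi * real k) = ((boundary_lift H ^^ k) 0 - 0) / real k"
    using period_nonzero
    by (intro eventually_sequentiallyI[of 1]) (simp add: boundary_lift_iterate g_def field_simps)
  ultimately have "(\<lambda>k. ((boundary_lift H ^^ k) 0 - 0) / real k) \<longlonglongrightarrow> - 1 / period"
    by (rule Lim_transform_eventually)
  then show ?thesis unfolding rotation_number_def by (rule limI)
qed

lemma time_function_increment:
  assumes "\<bar>rotation_number H\<bar> < 1"
  shows "\<exists>\<delta>>0. \<forall>\<Theta>. (\<forall>y. (\<Theta> has_real_derivative 1 / (\<bar>radial_deriv y\<bar> + \<delta>)) (at y))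
    \<longrightarrow> \<Theta> (2 * pi) - \<Theta> 0 > 1"
proof (rule reciprocal_antiderivative_perturb)
  have "\<bar>period\<bar> > 1"
    using assms rotation_number_eq period_nonzero by (simp add: abs_divide divide_less_eq)
  then show "\<tau> (2 * pi) - \<tau> 0 > 1" using abs_period by simp
  show "continuous_on {0..2 * pi} (\<lambda>y. \<bar>radial_deriv y\<bar>)"
    using continuous_at_imp_continuous_on isCont_radial_deriv by (blast intro: continuous_on_rabs)
qed (use radial_deriv_nonzero \<tau>_deriv in auto)

end

lemma (in boundary_hamiltonian) time_function_exists:
  assumes rot: "\<bar>rotation_number H\<bar> < 1"
  obtains \<delta> \<Theta> where "\<delta> > 0" "\<And>y. (\<Theta> has_real_derivative 1 / (\<bar>radial_deriv y\<bar> + \<delta>)) (at y)"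
    "\<And>y. \<Theta> (y + 2 * pi) - \<Theta> y > 1"
proof -
  have "\<exists>y0. \<exists>\<delta>>0. \<forall>\<Theta>. (\<forall>y. (\<Theta> has_real_derivative 1 / (\<bar>radial_deriv y\<bar> + \<delta>)) (at y))
      \<longrightarrow> \<Theta> (y0 + 2 * pi) - \<Theta> y0 > 1"
  proof (cases "\<exists>y0. radial_deriv y0 = 0")
    case True
    then obtain y0 where "radial_deriv y0 = 0" by blast
    from reciprocal_antiderivative_unbounded_at_zero[OF this radial_deriv_differentiable, of "2 * pi" 1]
    show ?thesis by auto
  next
    case False
    have "isCont (\<lambda>y. 1 / radial_deriv y) y" for y
      using False by (intro continuous_intros isCont_radial_deriv) auto
    then obtain P where P: "\<And>y. (P has_real_derivative 1 / radial_deriv y) (at y)"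
      using continuous_has_real_antiderivative by blast
    interpret nonvanishing_boundary_hamiltonian H "\<lambda>y. P y - P 0"
      by unfold_locales (use False P in \<open>auto intro!: derivative_eq_intros\<close>)
    from time_function_increment[OF rot] show ?thesis by (metis add_0)
  qed
  then obtain y0 \<delta> where "\<delta> > 0" and increment: "\<And>\<Theta>. (\<forall>y. (\<Theta> has_real_derivative 1 / (\<bar>radial_deriv y\<bar> + \<delta>)) (at y))
      \<Longrightarrow> \<Theta> (y0 + 2 * pi) - \<Theta> y0 > 1" by blast
  have "isCont (\<lambda>y. 1 / (\<bar>radial_deriv y\<bar> + \<delta>)) y" for y
    using \<open>\<delta> > 0\<close> by (intro continuous_intros isCont_radial_deriv) (auto simp: add_nonneg_pos)
  then obtain \<Theta> where \<Theta>: "\<And>y. (\<Theta> has_real_derivative 1 / (\<bar>radial_deriv y\<bar> + \<delta>)) (at y)"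
    using continuous_has_real_antiderivative by blast
  have "\<Theta> (y + 2 * pi) - \<Theta> y > 1" for y
    using antiderivative_periodic_increment[OF \<Theta>, of "2 * pi" y y0] increment \<Theta> radial_deriv_periodic by simp
  with that \<open>\<delta> > 0\<close> \<Theta> show ?thesis by blast
qed

section \<open>The cut-off Hamiltonian\<close>

definition cutoff_map :: "(real \<Rightarrow> real) \<Rightarrow> complex \<Rightarrow> complex" where
  "cutoff_map \<rho> z = of_real ((1 + \<rho> (norm z - 1)) / norm z) * z"

definition radial_cutoff :: "real \<Rightarrow> (real \<Rightarrow> real) \<Rightarrow> bool" where
  "radial_cutoff e \<rho> \<longleftrightarrow> (\<forall>r. (\<rho> has_real_derivative deriv \<rho> r) (at r)) \<and> (\<forall>r\<le>0. \<rho> r = r)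
     \<and> (\<forall>r\<ge>e. \<rho> r = 0) \<and> (\<forall>r\<ge>0. 0 \<le> \<rho> r \<and> \<rho> r \<le> e \<and> \<bar>deriv \<rho> r\<bar> \<le> 1)"

lemma cutoff_ham_eq:
  assumes "\<And>r. r \<le> 0 \<Longrightarrow> \<rho> r = r"
  shows "cutoff_ham H \<rho> t = (\<lambda>z. H t (cutoff_map \<rho> z))"
proof
  fix z
  show "cutoff_ham H \<rho> t z = H t (cutoff_map \<rho> z)"
  proof (cases "norm z \<le> 1 \<and> z \<noteq> 0")
    case True
    then have "(1 + \<rho> (norm z - 1)) / norm z = 1" using assms[of "norm z - 1"] by simp
    then show ?thesis using True by (simp add: cutoff_ham_def cutoff_map_def)
  qed (auto simp: cutoff_ham_def cutoff_map_def)
qed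

lemma cutoff_map_radial_derivative:
  assumes z: "z \<noteq> 0" and \<rho>: "(\<rho> has_real_derivative d) (at (norm z - 1))"
  obtains m' where "(cutoff_map \<rho> has_derivative m') (at z)" "m' z = of_real d * z"
proof -
  define c where "c = 1 + \<rho> (norm z - 1)"
  define m' where "m' h = of_real ((d * (h \<bullet> sgn z) * norm z - c * (h \<bullet> sgn z)) / (norm z)\<^sup>2) * z
    + of_real (c / norm z) * h" for h
  have "((\<lambda>x. norm x - 1) has_derivative (\<lambda>h. h \<bullet> sgn z)) (at z)"
    using has_derivative_norm[OF z] by (auto intro!: derivative_eq_intros)
  from has_derivative_compose[OF this \<rho>[unfolded has_field_derivative_def]]
  have \<rho>_norm: "((\<lambda>x. \<rho> (norm x - 1)) has_derivative (\<lambda>h. d * (h \<bullet> sgn z))) (at z)" by (simp add: o_def)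
  have "(cutoff_map \<rho> has_derivative m') (at z)"
    unfolding cutoff_map_def[abs_def] m'_def c_def
    by (rule has_derivative_eq_rhs, (rule derivative_eq_intros \<rho>_norm has_derivative_norm[OF z] | simp)+)
      (use z in \<open>auto simp: field_simps power2_eq_square\<close>)
  moreover have "m' z = of_real d * z"
  proof -
    have "z \<bullet> sgn z = norm z"
      using z by (simp add: sgn_div_norm inner_scaleR_right power2_norm_eq_inner[symmetric] power2_eq_square)
    then have "m' z = of_real ((d * norm z * norm z - c * norm z) / (norm z)\<^sup>2) * z + of_real (c / norm z) * z"
      by (simp add: m'_def)
    also have "(d * norm z * norm z - c * norm z) / (norm z)\<^sup>2 = d - c / norm z"
      using z by (simp add: field_simps power2_eq_square)
    finally show ?thesis by (simp add: algebra_simps)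
  qed
  ultimately show ?thesis by (rule that)
qed

context boundary_hamiltonian
begin

lemma cutoff_angular_momentum:
  assumes "\<And>r. r \<le> 0 \<Longrightarrow> \<rho> r = r" and z: "z \<noteq> 0" and \<rho>: "(\<rho> has_real_derivative d) (at (norm z - 1))"
  shows "Im (cnj z * hamvf (cutoff_ham H \<rho>) t z) = - d * dH t (cutoff_map \<rho> z) z"
proof -
  obtain m' where m': "(cutoff_map \<rho> has_derivative m') (at z)" "m' z = of_real d * z"
    using cutoff_map_radial_derivative[OF z \<rho>] by blast
  have "(cutoff_ham H \<rho> t has_derivative (\<lambda>w. dH t (cutoff_map \<rho> z) (m' w))) (at z)"
    using diff_chain_at[OF m'(1) dH_has_derivative[of t "cutoff_map \<rho> z"]] cutoff_ham_eq[OF assms(1), of H t]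
    by (simp add: o_def)
  from Im_cnj_mult_hamvf[of "cutoff_ham H \<rho>" t _ z, OF this]
  have "Im (cnj z * hamvf (cutoff_ham H \<rho>) t z) = - dH t (cutoff_map \<rho> z) (d *\<^sub>R z)"
    using m'(2) by (simp add: scaleR_conv_of_real)
  then show ?thesis by (simp add: linear_scale[OF linear_dH])
qed

lemma dH_uniform_near_boundary:
  assumes "\<delta> > 0"
  obtains \<eta> where "\<eta> > 0"
    "\<And>t u g. t \<in> {0..1} \<Longrightarrow> norm u = 1 \<Longrightarrow> 1 \<le> g \<Longrightarrow> g \<le> 1 + \<eta> \<Longrightarrow>
      \<bar>dH t (of_real g * u) u - dH 0 u u\<bar> \<le> \<delta>"
proof -
  define K where "K = {0..1::real} \<times> cball (0::complex) 2 \<times> sphere (0::complex) 1"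
  define F where "F p = dH (fst p) (fst (snd p)) (snd (snd p))" for p :: "real \<times> complex \<times> complex"
  have "compact K" unfolding K_def by (intro compact_Times compact_Icc compact_cball compact_sphere)
  have "continuous_on K F"
  proof -
    have cont: "continuous_on UNIV Hx" "continuous_on UNIV Hy"
      using smooth_continuous_on smooth_Hx smooth_Hy by auto
    show ?thesis unfolding F_def[abs_def] dH_def
      by (intro continuous_intros continuous_on_compose2[OF cont(1)] continuous_on_compose2[OF cont(2)]) auto
  qed
  from compact_uniformly_continuous[OF this \<open>compact K\<close>]
  have "uniformly_continuous_on K F" .
  then obtain e where "e > 0" and e: "\<And>p q. p \<in> K \<Longrightarrow> q \<in> K \<Longrightarrow> dist q p < e \<Longrightarrow> dist (F q) (F p) < \<delta>"
    using \<open>\<delta> > 0\<close> unfolding uniformly_continuous_on_def by metis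
  show ?thesis
  proof (rule that[of "min 1 (e / 2)"])
    fix t g :: real and u :: complex assume t: "t \<in> {0..1}" and u: "norm u = 1" and g: "1 \<le> g" "g \<le> 1 + min 1 (e / 2)"
    have "of_real g * u - u = of_real (g - 1) * u" by (simp add: algebra_simps)
    then have "norm (of_real g * u - u) = g - 1"
      using u g by (simp add: norm_mult del: of_real_diff)
    then have "dist (t, of_real g * u, u) (t, u, u) < e"
      using g \<open>e > 0\<close> by (simp add: dist_Pair_Pair dist_norm)
    moreover have "(t, of_real g * u, u) \<in> K" "(t, u, u) \<in> K"
      using t u g by (auto simp: K_def norm_mult)
    ultimately have "\<bar>dH t (of_real g * u) u - dH t u u\<bar> < \<delta>"
      using e by (force simp: F_def dist_real_def)
    then show "\<bar>dH t (of_real g * u) u - dH 0 u u\<bar> \<le> \<delta>" using dH_autonomous[OF u, of t] by simp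
  qed (use \<open>e > 0\<close> in simp)
qed

lemma cutoff_angular_velocity_eq:
  assumes "\<And>r. r \<le> 0 \<Longrightarrow> \<rho> r = r" and \<rho>: "(\<rho> has_real_derivative d) (at (norm z - 1))"
    and "z \<noteq> 0" and polar: "z = of_real (norm z) * cis \<phi>"
  shows "Im (hamvf (cutoff_ham H \<rho>) t z / z)
    = - d * dH t (of_real (1 + \<rho> (norm z - 1)) * cis \<phi>) (cis \<phi>) / norm z"
proof -
  define R where "R = norm z"
  define g where "g = 1 + \<rho> (R - 1)"
  have "R > 0" using \<open>z \<noteq> 0\<close> by (simp add: R_def)
  have "z * cnj z = of_real (R\<^sup>2)" using complex_norm_square[of z] by (simp add: R_def)
  moreover have "hamvf (cutoff_ham H \<rho>) t z / z = cnj z * hamvf (cutoff_ham H \<rho>) t z / (z * cnj z)"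
    using \<open>z \<noteq> 0\<close> by (simp add: field_simps)
  ultimately have "Im (hamvf (cutoff_ham H \<rho>) t z / z) = Im (cnj z * hamvf (cutoff_ham H \<rho>) t z) / R\<^sup>2"
    by (simp add: Im_divide_of_real)
  also have "\<dots> = - d * dH t (cutoff_map \<rho> z) z / R\<^sup>2"
    using cutoff_angular_momentum[OF assms(1) \<open>z \<noteq> 0\<close> \<rho>] by simp
  also have "dH t (cutoff_map \<rho> z) z = R * dH t (of_real g * cis \<phi>) (cis \<phi>)"
  proof -
    have zR: "z = of_real R * cis \<phi>" unfolding R_def by (rule polar)
    have "cutoff_map \<rho> z = of_real (g / R) * z" by (simp add: cutoff_map_def g_def R_def)
    also have "\<dots> = of_real g * cis \<phi>" using \<open>R > 0\<close> by (subst zR) (simp add: field_simps)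
    finally show ?thesis
      by (subst zR) (simp add: linear_scale[OF linear_dH] flip: scaleR_conv_of_real)
  qed
  finally show ?thesis using \<open>R > 0\<close> by (simp add: power2_eq_square g_def R_def)
qed

lemma cutoff_angular_speed_le:
  assumes cutoff: "radial_cutoff e \<rho>" and "e \<le> \<eta>" and "\<delta> \<ge> 0"
    and est: "\<And>t u g. t \<in> {0..1} \<Longrightarrow> norm u = 1 \<Longrightarrow> 1 \<le> g \<Longrightarrow> g \<le> 1 + \<eta> \<Longrightarrow>
      \<bar>dH t (of_real g * u) u - dH 0 u u\<bar> \<le> \<delta>"
    and t: "t \<in> {0..1}" and z: "norm z \<ge> 1" and polar: "z = of_real (norm z) * cis \<phi>"
  shows "\<bar>Im (hamvf (cutoff_ham H \<rho>) t z / z)\<bar> \<le> \<bar>radial_deriv \<phi>\<bar> + \<delta>"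
proof -
  note \<rho> = cutoff[unfolded radial_cutoff_def]
  define R where "R = norm z"
  define A where "A = dH t (of_real (1 + \<rho> (R - 1)) * cis \<phi>) (cis \<phi>)"
  have "z \<noteq> 0" "R \<ge> 1" using z by (auto simp: R_def)
  have "Im (hamvf (cutoff_ham H \<rho>) t z / z) = - deriv \<rho> (R - 1) * A / R"
    using \<rho> cutoff_angular_velocity_eq[OF _ _ \<open>z \<noteq> 0\<close> polar, of \<rho> "deriv \<rho> (R - 1)" t]
    by (simp add: A_def R_def)
  moreover have "\<bar>deriv \<rho> (R - 1) * A / R\<bar> \<le> \<bar>radial_deriv \<phi>\<bar> + \<delta>"
  proof (cases "R - 1 > e")
    case True
    have "deriv \<rho> (R - 1) = 0"
      by (rule DERIV_local_const[of \<rho> _ "R - 1" "R - 1 - e"]) (use True \<rho> in auto)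
    then show ?thesis using \<open>\<delta> \<ge> 0\<close> by simp
  next
    case False
    have "0 \<le> \<rho> (R - 1)" "\<rho> (R - 1) \<le> e" using \<rho> \<open>R \<ge> 1\<close> by auto
    then have "\<bar>A - radial_deriv \<phi>\<bar> \<le> \<delta>"
      unfolding A_def radial_deriv_def using \<open>e \<le> \<eta>\<close> by (intro est[OF t]) auto
    moreover have "\<bar>deriv \<rho> (R - 1)\<bar> \<le> 1" using \<rho> \<open>R \<ge> 1\<close> by simp
    ultimately have "\<bar>deriv \<rho> (R - 1) * A\<bar> \<le> 1 * (\<bar>radial_deriv \<phi>\<bar> + \<delta>)"
      unfolding abs_mult by (intro mult_mono) auto
    moreover have "\<bar>deriv \<rho> (R - 1) * A / R\<bar> \<le> \<bar>deriv \<rho> (R - 1) * A\<bar>"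
      using \<open>R \<ge> 1\<close> by (simp add: abs_divide divide_le_eq mult_le_cancel_left1)
    ultimately show ?thesis by simp
  qed
  ultimately show ?thesis by simp
qed

lemma cutoff_trajectory_wind_lt_1:
  assumes "\<delta> > 0"
    and \<Theta>: "\<And>y. (\<Theta> has_real_derivative 1 / (\<bar>radial_deriv y\<bar> + \<delta>)) (at y)"
    and increment: "\<And>y. \<Theta> (y + 2 * pi) - \<Theta> y > 1"
    and est: "\<And>t u g. t \<in> {0..1} \<Longrightarrow> norm u = 1 \<Longrightarrow> 1 \<le> g \<Longrightarrow> g \<le> 1 + \<eta> \<Longrightarrow>
      \<bar>dH t (of_real g * u) u - dH 0 u u\<bar> \<le> \<delta>"
    and cutoff: "radial_cutoff e \<rho>" and "e \<le> \<eta>"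
    and x: "\<And>t. t \<in> {0..1} \<Longrightarrow> (x has_vector_derivative hamvf (cutoff_ham H \<rho>) t (x t)) (at t within {0..1})"
    and outside: "\<And>t. t \<in> {0..1} \<Longrightarrow> norm (x t) \<ge> 1"
  shows "\<bar>wind x\<bar> < 1"
proof -
  have nz: "x t \<noteq> 0" if "t \<in> {0..1}" for t using outside[OF that] by auto
  obtain \<phi> where "continuous_on {0..1} \<phi>" and polar: "\<And>t. t \<in> {0..1} \<Longrightarrow> x t = of_real (norm (x t)) * cis (\<phi> t)"
    and \<phi>: "\<And>t. t \<in> {0..1} \<Longrightarrow>
      (\<phi> has_real_derivative Im (hamvf (cutoff_ham H \<rho>) t (x t) / x t)) (at t within {0..1})"
    using angle_lift_exists[OF x nz] by blast
  have "\<bar>\<phi> 1 - \<phi> 0\<bar> < 2 * pi"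
  proof (rule angle_increment_lt_period[OF \<phi> _ _ \<Theta> increment])
    show "\<bar>Im (hamvf (cutoff_ham H \<rho>) t (x t) / x t)\<bar> \<le> \<bar>radial_deriv (\<phi> t)\<bar> + \<delta>" if "t \<in> {0..1}" for t
      using cutoff_angular_speed_le[OF cutoff \<open>e \<le> \<eta>\<close> _ est that outside[OF that] polar[OF that]] \<open>\<delta> > 0\<close>
      by simp
    show "\<bar>radial_deriv y\<bar> + \<delta> > 0" for y using \<open>\<delta> > 0\<close> by (simp add: add_nonneg_pos)
  qed
  moreover have "wind x = (\<phi> 1 - \<phi> 0) / (2 * pi)"
    by (rule wind_eq_angle_increment) fact+
  ultimately show ?thesis by (simp add: abs_divide divide_less_eq)
qed

end

theorem lemma4p2:
  fixes H :: "real \<Rightarrow> complex \<Rightarrow> real" and \<rho> :: "nat \<Rightarrow> real \<Rightarrow> real"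
  assumes H_smooth: "smooth (\<lambda>p::real \<times> complex. H (fst p) (snd p))"
    and H_periodic: "\<And>t z. H (t + 1) z = H t z"
    and H_boundary: "\<And>t z. norm z = 1 \<Longrightarrow> H t z = 0"
    and X_autonomous: "\<And>t s z. norm z = 1 \<Longrightarrow> hamvf H t z = hamvf H s z"
    and rot: "\<bar>rotation_number H\<bar> < 1"
    and rho_smooth: "\<And>n. n \<ge> 1 \<Longrightarrow> smooth (\<rho> n)"
    and rho_neg: "\<And>n r. n \<ge> 1 \<Longrightarrow> r \<le> 0 \<Longrightarrow> \<rho> n r = r"
    and rho_far: "\<And>n r. n \<ge> 1 \<Longrightarrow> r \<ge> 1 / real n \<Longrightarrow> \<rho> n r = 0"
    and rho_nonneg: "\<And>n r. n \<ge> 1 \<Longrightarrow> r \<ge> 0 \<Longrightarrow> \<rho> n r \<ge> 0"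
    and rho_deriv_bound: "\<And>n r. n \<ge> 1 \<Longrightarrow> r \<ge> 0 \<Longrightarrow> \<bar>deriv (\<rho> n) r\<bar> \<le> 1"
    and rho_bound: "\<And>n r. n \<ge> 1 \<Longrightarrow> r \<ge> 0 \<Longrightarrow> \<bar>\<rho> n r\<bar> \<le> 1 / real n"
    and rho_deriv_lower: "\<And>n r. n \<ge> 1 \<Longrightarrow> deriv (\<rho> n) r \<ge> - (1 / real n)"
  shows "\<exists>N. \<forall>n\<ge>N. \<forall>x :: real \<Rightarrow> complex.
           (\<forall>t\<in>{0..1}. (x has_vector_derivative hamvf (cutoff_ham H (\<rho> n)) t (x t)) (at t within {0..1}))
           \<and> (\<forall>t\<in>{0..1}. norm (x t) \<ge> 1)
           \<longrightarrow> \<bar>wind x\<bar> < 1"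
proof -
  interpret boundary_hamiltonian H
    using H_smooth H_boundary X_autonomous by unfold_locales
  obtain \<delta> \<Theta> where "\<delta> > 0" and \<Theta>: "\<And>y. (\<Theta> has_real_derivative 1 / (\<bar>radial_deriv y\<bar> + \<delta>)) (at y)"
    and increment: "\<And>y. \<Theta> (y + 2 * pi) - \<Theta> y > 1"
    using time_function_exists[OF rot] by blast
  obtain \<eta> where "\<eta> > 0" and est: "\<And>t u g. t \<in> {0..1} \<Longrightarrow> norm u = 1 \<Longrightarrow> 1 \<le> g \<Longrightarrow> g \<le> 1 + \<eta> \<Longrightarrow>
      \<bar>dH t (of_real g * u) u - dH 0 u u\<bar> \<le> \<delta>"
    using dH_uniform_near_boundary[OF \<open>\<delta> > 0\<close>] by blast
  obtain N :: nat where N: "inverse (real (Suc N)) < \<eta>" using reals_Archimedean[OF \<open>\<eta> > 0\<close>] by blast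
  have "\<bar>wind x\<bar> < 1" if "Suc N \<le> n"
    and "\<forall>t\<in>{0..1}. (x has_vector_derivative hamvf (cutoff_ham H (\<rho> n)) t (x t)) (at t within {0..1})"
    and "\<forall>t\<in>{0..1}. norm (x t) \<ge> 1" for n x
  proof (rule cutoff_trajectory_wind_lt_1[OF \<open>\<delta> > 0\<close> \<Theta> increment est])
    have "n \<ge> 1" using \<open>Suc N \<le> n\<close> by simp
    have "1 / real n \<le> 1 / real (Suc N)" using \<open>Suc N \<le> n\<close> by (intro divide_left_mono) auto
    then show "1 / real n \<le> \<eta>" using N by (simp add: inverse_eq_divide)
    show "radial_cutoff (1 / real n) (\<rho> n)"
      unfolding radial_cutoff_def
      using smooth_has_real_derivative[OF rho_smooth] rho_neg rho_far rho_nonneg rho_deriv_bound rho_bound \<open>n \<ge> 1\<close>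
      by (auto simp: abs_le_iff)
  qed (use that in auto)
  then show ?thesis by blast
qed

end
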